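(* Let $0\le\alpha\le\alpha_{space}:=\min(v_0/4,\gamma/(2V^0))$, let $u_0\in C_\alpha$ and let $(s,u)$ be the solution of the free-interface problem with initial data $u_0$. Then for all $t>0$ $$|u(\cdot,t)|_\alpha\le \frac{V^0}{\sqrt\gamma}+2\exp[(-\gamma+\alpha^2+\alpha V^0)t]\,|u_0|_\alpha .$$ If in addition $\alpha<\alpha_{time}:=\frac{V^0}{2}\big(\sqrt{1+4\gamma/(V^0)^2}-1\big)$ (the positive root of $\alpha^2+\alpha V^0-\gamma=0$), then the contribution from the initial data decays exponentially: $|T_2(t)u_0|_\alpha\le 2e^{-\kappa t}|u_0|_\alpha$ with $\kappa=\gamma-\alpha^2-\alpha V^0>0$.
   Context: Fix $\gamma>0$, $0<v_0\le V^0$. The kinetics $g:[0,\infty)\to\mathbb{R}$ is monotonically decreasing, differentiable, $|g'|\le C$, $-V^0\le g\le -v_0$. Free-interface problem: find $s(t)$, $s(0)=0$, and $u(x,t)$ with $u_t=u_{xx}-\gamma u$ for $x\ne s(t)$, $t>0$; $u(x,0)=u_0(x)$; $g(u(s(t),t))=v(t)$; $u_x^+(s(t),t)-u_x^-(s(t),t)=v(t)$, with $v=s'$, $u_x^\pm$ one-sided derivatives, $u\to0$ at $\pm\infty$; the classical solution exists, is unique, and $-V^0\le v\le-v_0$. With $G(x,t,\xi,\tau)=[4\pi(t-\tau)]^{-1/2}\exp\{-(x-\xi)^2/(4(t-\tau))\}$, $u(\cdot,t)=T_1(t)u_0+T_2(t)u_0$ where $(T_2(t)u_0)(x)=e^{-\gamma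 t}\int G(x,t,\xi,0)u_0(\xi)d\xi$ (initial-data contribution) and $(T_1(t)u_0)(x)=-\int_0^t e^{-\gamma(t-\tau)}G(x,t,s(\tau),\tau)v(\tau)d\tau$. Weighted norms: $|f|_\alpha=\sup_x e^{\alpha|x|}|f(x)|$, $C_\alpha=\{f\in C(\mathbb{R}):|f|_\alpha<\infty\}$; for functions associated with the solution at time $t$, $|f(\cdot,t)|_\alpha:=\sup_x e^{\alpha|x-s(t)|}|f(x,t)|$. *)

theory Defs
  imports "HOL-Analysis.Analysis"
begin

definition heatG :: "real \<Rightarrow> real \<Rightarrow> real \<Rightarrow> real \<Rightarrow> real" where
  "heatG x t \<xi> \<tau> = exp (- ((x - \<xi>)\<^sup>2) / (4 * (t - \<tau>))) / sqrt (4 * pi * (t - \<tau>))"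

definition T2 :: "real \<Rightarrow> real \<Rightarrow> (real \<Rightarrow> real) \<Rightarrow> real \<Rightarrow> real" where
  "T2 \<gamma> t u0 x = exp (- \<gamma> * t) * integral UNIV (\<lambda>\<xi>. heatG x t \<xi> 0 * u0 \<xi>)"

text \<open>Interface contribution (T_1(t) u_0)(x); it depends on u_0 through s and v = s'.\<close>
definition T1 :: "real \<Rightarrow> (real \<Rightarrow> real) \<Rightarrow> (real \<Rightarrow> real) \<Rightarrow> real \<Rightarrow> real \<Rightarrow> real" where
  "T1 \<gamma> s v t x = - integral {0..t} (\<lambda>\<tau>. exp (- \<gamma> * (t - \<tau>)) * heatG x t (s \<tau>) \<tau> * v \<tau>)"

text \<open>Weighted sup norm |f|_alpha (extended-real valued, so that it is always defined).\<close>
definition wnorm :: "real \<Rightarrow> (real \<Rightarrow> real) \<Rightarrow> ereal" where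
  "wnorm \<alpha> f = (SUP x. ereal (exp (\<alpha> * \<bar>x\<bar>) * \<bar>f x\<bar>))"

text \<open>Weighted norm centred at the interface position c = s(t).\<close>
definition wnorm_at :: "real \<Rightarrow> real \<Rightarrow> (real \<Rightarrow> real) \<Rightarrow> ereal" where
  "wnorm_at \<alpha> c f = (SUP x. ereal (exp (\<alpha> * \<bar>x - c\<bar>) * \<bar>f x\<bar>))"

definition C_alpha :: "real \<Rightarrow> (real \<Rightarrow> real) set" where
  "C_alpha \<alpha> = {f. continuous_on UNIV f \<and> wnorm \<alpha> f < \<infinity>}"

definition fip_solution ::
  "real \<Rightarrow> (real \<Rightarrow> real) \<Rightarrow> (real \<Rightarrow> real) \<Rightarrow> (real \<Rightarrow> real) \<Rightarrow> (real \<Rightarrow> real)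
     \<Rightarrow> (real \<Rightarrow> real \<Rightarrow> real) \<Rightarrow> bool" where
  "fip_solution \<gamma> g u0 s v u \<longleftrightarrow>
     s 0 = 0 \<and>
     (\<forall>t\<ge>0. (s has_real_derivative v t) (at t within {0..})) \<and>
     continuous_on {0..} v \<and>
     continuous_on {p. snd p \<ge> 0} (\<lambda>p. u (fst p) (snd p)) \<and>
     (\<forall>x. u x 0 = u0 x) \<and>
     (\<forall>t>0. \<forall>x. x \<noteq> s t \<longrightarrow>
        (\<lambda>y. u y t) field_differentiable (at x) \<and>
        (\<exists>uxx. (deriv (\<lambda>y. u y t) has_real_derivative uxx) (at x) \<and>
               ((\<lambda>\<tau>. u x \<tau>) has_real_derivative (uxx - \<gamma> * u x t)) (at t))) \<and>
     (\<forall>t>0. u (s t) t \<ge> 0 \<and> g (u (s t) t) = v t) \<and>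
     (\<forall>t>0. \<exists>dp dm. ((\<lambda>y. u y t) has_real_derivative dp) (at_right (s t)) \<and>
                   ((\<lambda>y. u y t) has_real_derivative dm) (at_left (s t)) \<and>
                   dp - dm = v t) \<and>
     (\<forall>t\<ge>0. ((\<lambda>x. u x t) \<longlongrightarrow> 0) at_top \<and> ((\<lambda>x. u x t) \<longlongrightarrow> 0) at_bot)"

end

theory Submission
  imports Defs "HOL-Probability.Distributions"
begin

text \<open>
  Write u = T1 + T2. Against the heat kernel, the weight e^(\<alpha>|\<xi> - x|) is absorbed by completing
  the square at the price of a factor e^(\<alpha>^2 t); recentring the weight from 0 to s(t) costs
  e^(\<alpha> V0 t) because |s(t)| \<le> V0 t. This gives the bound on T2. In T1 the source moves with
  speed at most V0, so the same estimate bounds the integrand by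
  V0 / sqrt (4 pi) e^(-\<alpha>|x - s(t)|) e^(-c (t - \<tau>)) / sqrt (t - \<tau>) with c = \<gamma> - \<alpha>^2 - \<alpha> V0,
  and \<integral>0..\<infinity> e^(-c r) / sqrt r dr = \<Gamma>(1/2) / sqrt c = sqrt (pi / c). For
  \<alpha> \<le> \<alpha>_space one has c \<ge> \<gamma>/4, hence |T1|_\<alpha> \<le> V0 / (2 sqrt c) \<le> V0 / sqrt \<gamma>. Finally \<kappa> > 0
  says exactly that \<alpha> lies below the positive root of \<alpha>^2 + \<alpha> V0 - \<gamma>.
\<close>

lemma heatG_nonneg: "\<tau> \<le> t \<Longrightarrow> 0 \<le> heatG x t \<xi> \<tau>"
  by (simp add: heatG_def)

lemma heatG_has_integral_1:
  assumes "\<tau> < t"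
  shows "((\<lambda>\<xi>. heatG x t \<xi> \<tau>) has_integral 1) UNIV"
proof -
  have "(\<lambda>\<xi>. heatG x t \<xi> \<tau>) = normal_density x (sqrt (2 * (t - \<tau>)))"
    using assms by (auto simp: fun_eq_iff heatG_def normal_density_def power2_commute)
  then show ?thesis
    using has_integral_integral_lborel[OF integrable_normal_density[of "sqrt (2 * (t - \<tau>))" x]] assms
    by simp
qed

lemma heatG_mult_exp:
  assumes "\<tau> < t"
  shows "heatG x t \<xi> \<tau> * exp (a * (\<xi> - x)) = exp (a\<^sup>2 * (t - \<tau>)) * heatG (x + 2 * a * (t - \<tau>)) t \<xi> \<tau>"
proof -
  have "- ((x - \<xi>)\<^sup>2) / (4 * (t - \<tau>)) + a * (\<xi> - x)
      = a\<^sup>2 * (t - \<tau>) + - ((x + 2 * a * (t - \<tau>) - \<xi>)\<^sup>2) / (4 * (t - \<tau>))"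
    using assms by (simp add: field_simps power2_eq_square)
  then show ?thesis
    by (simp add: heatG_def mult_exp_exp)
qed

lemma heatG_mult_exp_abs_le:
  assumes "\<tau> < t"
  shows "heatG x t \<xi> \<tau> * exp (a * \<bar>\<xi> - x\<bar>)
    \<le> exp (a\<^sup>2 * (t - \<tau>)) * (heatG (x + 2 * a * (t - \<tau>)) t \<xi> \<tau> + heatG (x - 2 * a * (t - \<tau>)) t \<xi> \<tau>)"
proof -
  have "exp (a * \<bar>\<xi> - x\<bar>) \<le> exp (a * (\<xi> - x)) + exp ((- a) * (\<xi> - x))"
    by (cases "\<xi> \<ge> x") (simp_all add: add_increasing add_increasing2 right_diff_distrib)
  then have "heatG x t \<xi> \<tau> * exp (a * \<bar>\<xi> - x\<bar>)
      \<le> heatG x t \<xi> \<tau> * exp (a * (\<xi> - x)) + heatG x t \<xi> \<tau> * exp ((- a) * (\<xi> - x))"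
    using heatG_nonneg[of \<tau> t x \<xi>] assms by (simp add: distrib_left[symmetric] mult_left_mono)
  also have "\<dots> = exp (a\<^sup>2 * (t - \<tau>)) * (heatG (x + 2 * a * (t - \<tau>)) t \<xi> \<tau> + heatG (x - 2 * a * (t - \<tau>)) t \<xi> \<tau>)"
    unfolding heatG_mult_exp[OF assms] by (simp add: distrib_left)
  finally show ?thesis .
qed

lemma heatG_le_exp_weight:
  assumes "\<tau> < t"
  shows "heatG x t \<xi> \<tau> \<le> exp (a\<^sup>2 * (t - \<tau>) - a * \<bar>x - \<xi>\<bar>) / sqrt (4 * pi * (t - \<tau>))"
proof -
  have "0 \<le> (\<bar>x - \<xi>\<bar> - 2 * a * (t - \<tau>))\<^sup>2" by simp
  then have "- ((x - \<xi>)\<^sup>2) / (4 * (t - \<tau>)) \<le> a\<^sup>2 * (t - \<tau>) - a * \<bar>x - \<xi>\<bar>"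
    using assms by (simp add: field_simps power2_eq_square)
  then show ?thesis
    using assms by (simp add: heatG_def divide_right_mono)
qed

lemma exp_over_sqrt_integral_le:
  fixes c t :: real
  assumes c: "c > 0"
  shows "(\<lambda>r. exp (- c * r) / sqrt r) integrable_on {0..t}"
    and "integral {0..t} (\<lambda>r. exp (- c * r) / sqrt r) \<le> sqrt (pi / c)"
proof -
  \<comment> \<open>rescale \<Gamma>(1/2) = \<integral>0..\<infinity> r powr (-1/2) e^(-r) dr = sqrt pi by r \<mapsto> c r\<close>
  define h :: "real \<Rightarrow> real" where "h = (\<lambda>r. r powr (- (1/2)) / exp r)"
  have h_nonneg: "0 \<le> h r" for r by (simp add: h_def)
  have Gamma: "(h has_integral sqrt pi) {0..}"
    using Gamma_integral_real[of "1/2"] by (simp add: h_def Gamma_one_half_real)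
  have h_int: "h integrable_on {0..c * t}"
    using integrable_on_subinterval[OF has_integral_integrable[OF Gamma]] by auto
  have h_le: "integral {0..c * t} h \<le> sqrt pi"
    using integral_subset_le[OF _ h_int has_integral_integrable[OF Gamma]] h_nonneg
      integral_unique[OF Gamma] by auto
  have stretched: "((\<lambda>r. h (c * r)) has_integral (1 / c) * integral {0..c * t} h) {0..t}"
    using has_integral_stretch_real[OF integrable_integral[OF h_int], of c] c by simp
  have h_stretch: "h (c * r) = exp (- c * r) / sqrt r / sqrt c" if "r \<in> {0..t}" for r
    using that c by (auto simp: h_def powr_minus powr_half_sqrt real_sqrt_mult powr_mult divide_simps exp_minus)
  have "((\<lambda>r. exp (- c * r) / sqrt r / sqrt c) has_integral (1 / c) * integral {0..c * t} h) {0..t}"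
    by (rule has_integral_eq[OF _ stretched]) (rule h_stretch)
  from has_integral_mult_left[OF this, of "sqrt c"]
  have I: "((\<lambda>r. exp (- c * r) / sqrt r) has_integral sqrt c * ((1 / c) * integral {0..c * t} h)) {0..t}"
    using c by (simp add: mult.commute)
  then show "(\<lambda>r. exp (- c * r) / sqrt r) integrable_on {0..t}" by blast
  have "sqrt c * ((1 / c) * integral {0..c * t} h) \<le> sqrt c * ((1 / c) * sqrt pi)"
    using h_le c by (intro mult_left_mono) auto
  also have "\<dots> = sqrt (pi / c)"
    using c by (simp add: real_sqrt_divide field_simps real_sqrt_mult)
  finally show "integral {0..t} (\<lambda>r. exp (- c * r) / sqrt r) \<le> sqrt (pi / c)"
    using integral_unique[OF I] by simp
qed

lemma exp_over_sqrt_reflected_integral_le: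
  fixes c t :: real
  assumes c: "c > 0"
  shows "(\<lambda>\<tau>. exp (- c * (t - \<tau>)) / sqrt (t - \<tau>)) integrable_on {0..t}"
    and "integral {0..t} (\<lambda>\<tau>. exp (- c * (t - \<tau>)) / sqrt (t - \<tau>)) \<le> sqrt (pi / c)"
proof -
  define k :: "real \<Rightarrow> real" where "k = (\<lambda>r. exp (- c * r) / sqrt r)"
  have "(k has_integral integral {0..t} k) {0..t}"
    using exp_over_sqrt_integral_le(1)[OF c] unfolding k_def by blast
  then have "((\<lambda>r. k (- r)) has_integral integral {0..t} k) {-t..0}"
    using has_integral_reflect_real[where f=k and a=0 and b=t] by simp
  from has_integral_shift_real_ivl[OF this, of "- t"]
  have I: "((\<lambda>\<tau>. k (t - \<tau>)) has_integral integral {0..t} k) {0..t}"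
    by simp
  then show "(\<lambda>\<tau>. exp (- c * (t - \<tau>)) / sqrt (t - \<tau>)) integrable_on {0..t}"
    unfolding k_def by blast
  show "integral {0..t} (\<lambda>\<tau>. exp (- c * (t - \<tau>)) / sqrt (t - \<tau>)) \<le> sqrt (pi / c)"
    using integral_unique[OF I] exp_over_sqrt_integral_le(2)[OF c] unfolding k_def by simp
qed

lemma abs_integral_le_exp_over_sqrt_kernel:
  fixes f :: "real \<Rightarrow> real"
  assumes c: "c > 0" and K: "K \<ge> 0"
    and f_le: "\<And>\<tau>. 0 \<le> \<tau> \<Longrightarrow> \<tau> < t \<Longrightarrow> \<bar>f \<tau>\<bar> \<le> K * (exp (- c * (t - \<tau>)) / sqrt (t - \<tau>))"
  shows "\<bar>integral {0..t} f\<bar> \<le> K * sqrt (pi / c)"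
proof -
  define k where "k = (\<lambda>\<tau>. K * (exp (- c * (t - \<tau>)) / sqrt (t - \<tau>)))"
  \<comment> \<open>f is unconstrained at \<tau> = t, where the kernel takes the junk value 1 / sqrt 0 = 0\<close>
  define f' where "f' = f(t := 0)"
  have k_int: "k integrable_on {0..t}"
    unfolding k_def by (intro integrable_on_mult_right exp_over_sqrt_reflected_integral_le(1)[OF c])
  have f'_le: "norm (f' \<tau>) \<le> k \<tau>" if "\<tau> \<in> {0..t}" for \<tau>
    using that f_le[of \<tau>] by (cases "\<tau> = t") (auto simp: f'_def k_def)
  have "integral {0..t} f = integral {0..t} f'"
    by (rule integral_spike[of "{t}"]) (auto simp: f'_def)
  also have "\<bar>integral {0..t} f'\<bar> \<le> integral {0..t} k"
  proof (cases "f' integrable_on {0..t}")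
    case True
    then show ?thesis using integral_norm_bound_integral[OF True k_int f'_le] by simp
  next
    case False
    then show ?thesis
      using integral_nonneg[OF k_int] K by (simp add: k_def not_integrable_integral)
  qed
  also have "integral {0..t} k = K * integral {0..t} (\<lambda>\<tau>. exp (- c * (t - \<tau>)) / sqrt (t - \<tau>))"
    unfolding k_def by (rule integral_mult_right)
  also have "\<dots> \<le> K * sqrt (pi / c)"
    using exp_over_sqrt_reflected_integral_le(2)[OF c] K by (rule mult_left_mono)
  finally show ?thesis .
qed

lemma heatG_mult_weighted_le:
  assumes t: "t > 0" and \<alpha>: "\<alpha> \<ge> 0" and M: "M \<ge> 0"
    and f_le: "\<bar>f \<xi>\<bar> \<le> M * exp (- \<alpha> * \<bar>\<xi>\<bar>)"
  shows "\<bar>heatG x t \<xi> 0 * f \<xi>\<bar>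
    \<le> M * exp (- \<alpha> * \<bar>x\<bar>) * exp (\<alpha>\<^sup>2 * t) * (heatG (x + 2 * \<alpha> * t) t \<xi> 0 + heatG (x - 2 * \<alpha> * t) t \<xi> 0)"
proof -
  have h: "0 \<le> heatG x t \<xi> 0" using heatG_nonneg t by simp
  have "\<alpha> * \<bar>x\<bar> \<le> \<alpha> * \<bar>\<xi>\<bar> + \<alpha> * \<bar>\<xi> - x\<bar>"
    using \<alpha> by (simp add: distrib_left[symmetric] mult_left_mono)
  then have weight: "exp (- \<alpha> * \<bar>\<xi>\<bar>) \<le> exp (- \<alpha> * \<bar>x\<bar>) * exp (\<alpha> * \<bar>\<xi> - x\<bar>)"
    by (simp add: mult_exp_exp)
  have "\<bar>heatG x t \<xi> 0 * f \<xi>\<bar> = heatG x t \<xi> 0 * \<bar>f \<xi>\<bar>"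
    using h by (simp add: abs_mult)
  also have "\<dots> \<le> heatG x t \<xi> 0 * (M * (exp (- \<alpha> * \<bar>x\<bar>) * exp (\<alpha> * \<bar>\<xi> - x\<bar>)))"
    using h M f_le weight by (intro mult_left_mono) (auto intro: order_trans mult_left_mono)
  also have "\<dots> = M * exp (- \<alpha> * \<bar>x\<bar>) * (heatG x t \<xi> 0 * exp (\<alpha> * \<bar>\<xi> - x\<bar>))"
    by (simp add: ac_simps)
  also have "\<dots> \<le> M * exp (- \<alpha> * \<bar>x\<bar>) * exp (\<alpha>\<^sup>2 * t) * (heatG (x + 2 * \<alpha> * t) t \<xi> 0 + heatG (x - 2 * \<alpha> * t) t \<xi> 0)"
    using heatG_mult_exp_abs_le[of 0 t x \<xi> \<alpha>] t M by (simp add: mult_left_mono mult.assoc)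
  finally show ?thesis .
qed

lemma heat_semigroup_exp_weight_le:
  assumes t: "t > 0" and \<alpha>: "\<alpha> \<ge> 0"
    and u0_le: "\<And>\<xi>. \<bar>u0 \<xi>\<bar> \<le> M * exp (- \<alpha> * \<bar>\<xi>\<bar>)"
  shows "exp (\<alpha> * \<bar>x\<bar>) * \<bar>integral UNIV (\<lambda>\<xi>. heatG x t \<xi> 0 * u0 \<xi>)\<bar> \<le> 2 * M * exp (\<alpha>\<^sup>2 * t)"
proof -
  have M: "M \<ge> 0"
    using order_trans[OF abs_ge_zero u0_le[of 0]] by (simp add: zero_le_mult_iff)
  define B where "B = M * exp (- \<alpha> * \<bar>x\<bar>) * exp (\<alpha>\<^sup>2 * t)"
  define G where "G \<xi> = B * (heatG (x + 2 * \<alpha> * t) t \<xi> 0 + heatG (x - 2 * \<alpha> * t) t \<xi> 0)" for \<xi>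
  have G_int: "(G has_integral B * 2) UNIV"
    unfolding G_def[abs_def]
    using has_integral_mult_right[OF has_integral_add[OF heatG_has_integral_1 heatG_has_integral_1]] t
    by simp
  have le_G: "norm (heatG x t \<xi> 0 * u0 \<xi>) \<le> G \<xi>" for \<xi>
    using heatG_mult_weighted_le[where f=u0, OF t \<alpha> M u0_le] by (simp add: G_def B_def)
  have "\<bar>integral UNIV (\<lambda>\<xi>. heatG x t \<xi> 0 * u0 \<xi>)\<bar> \<le> B * 2"
  proof (cases "(\<lambda>\<xi>. heatG x t \<xi> 0 * u0 \<xi>) integrable_on UNIV")
    case True
    then show ?thesis
      using integral_norm_bound_integral[OF True has_integral_integrable[OF G_int] le_G]
        integral_unique[OF G_int] by simp
  next
    case False
    then show ?thesis using M by (simp add: B_def not_integrable_integral)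
  qed
  then show ?thesis
    by (simp add: B_def mult_exp_exp field_simps exp_minus)
qed

lemma T2_exp_weight_le:
  assumes t: "t > 0" and \<alpha>: "\<alpha> \<ge> 0" and c: "\<bar>c\<bar> \<le> V * t"
    and u0_le: "\<And>\<xi>. \<bar>u0 \<xi>\<bar> \<le> M * exp (- \<alpha> * \<bar>\<xi>\<bar>)"
  shows "exp (\<alpha> * \<bar>x - c\<bar>) * \<bar>T2 \<gamma> t u0 x\<bar> \<le> 2 * M * exp ((- \<gamma> + \<alpha>\<^sup>2 + \<alpha> * V) * t)"
proof -
  define I where "I = integral UNIV (\<lambda>\<xi>. heatG x t \<xi> 0 * u0 \<xi>)"
  have "\<bar>x - c\<bar> \<le> \<bar>x\<bar> + V * t"
    using c abs_triangle_ineq4[of x c] by linarith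
  then have "\<alpha> * \<bar>x - c\<bar> \<le> \<alpha> * \<bar>x\<bar> + \<alpha> * V * t"
    using mult_left_mono[OF _ \<alpha>] by (fastforce simp: distrib_left mult.assoc)
  then have "exp (\<alpha> * \<bar>x - c\<bar>) \<le> exp (\<alpha> * V * t) * exp (\<alpha> * \<bar>x\<bar>)"
    by (simp add: mult_exp_exp)
  then have "exp (\<alpha> * \<bar>x - c\<bar>) * \<bar>I\<bar> \<le> exp (\<alpha> * V * t) * (exp (\<alpha> * \<bar>x\<bar>) * \<bar>I\<bar>)"
    unfolding mult.assoc[symmetric] by (rule mult_right_mono) simp
  then have "exp (\<alpha> * \<bar>x - c\<bar>) * \<bar>T2 \<gamma> t u0 x\<bar> \<le> exp (- \<gamma> * t) * exp (\<alpha> * V * t) * (exp (\<alpha> * \<bar>x\<bar>) * \<bar>I\<bar>)"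
    by (simp add: T2_def I_def abs_mult mult.left_commute mult.assoc)
  also have "\<dots> \<le> exp (- \<gamma> * t) * exp (\<alpha> * V * t) * (2 * M * exp (\<alpha>\<^sup>2 * t))"
    unfolding I_def using heat_semigroup_exp_weight_le[OF t \<alpha> u0_le] by (simp add: mult_left_mono)
  also have "\<dots> = 2 * M * exp ((- \<gamma> + \<alpha>\<^sup>2 + \<alpha> * V) * t)"
    by (simp add: mult_exp_exp algebra_simps)
  finally show ?thesis .
qed

lemma damped_heatG_le_moving_weight:
  assumes \<tau>: "\<tau> < t" and \<alpha>: "\<alpha> \<ge> 0" and ab: "\<bar>b - a\<bar> \<le> V * (t - \<tau>)"
  shows "exp (- \<gamma> * (t - \<tau>)) * heatG x t a \<tau>
    \<le> exp (- \<alpha> * \<bar>x - b\<bar>) * (exp (- (\<gamma> - \<alpha>\<^sup>2 - \<alpha> * V) * (t - \<tau>)) / sqrt (4 * pi * (t - \<tau>)))"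
proof -
  have "\<bar>x - b\<bar> \<le> \<bar>x - a\<bar> + V * (t - \<tau>)"
    using ab abs_triangle_ineq[of "x - a" "a - b"] by (simp add: abs_minus_commute)
  then have "\<alpha> * \<bar>x - b\<bar> \<le> \<alpha> * \<bar>x - a\<bar> + \<alpha> * V * (t - \<tau>)"
    using mult_left_mono[OF _ \<alpha>] by (fastforce simp: distrib_left mult.assoc)
  then have "exp (- \<gamma> * (t - \<tau>)) * exp (\<alpha>\<^sup>2 * (t - \<tau>) - \<alpha> * \<bar>x - a\<bar>)
      \<le> exp (- \<alpha> * \<bar>x - b\<bar>) * exp (- (\<gamma> - \<alpha>\<^sup>2 - \<alpha> * V) * (t - \<tau>))"
    by (simp add: mult_exp_exp algebra_simps)
  then have "exp (- \<gamma> * (t - \<tau>)) * exp (\<alpha>\<^sup>2 * (t - \<tau>) - \<alpha> * \<bar>x - a\<bar>) / sqrt (4 * pi * (t - \<tau>))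
      \<le> exp (- \<alpha> * \<bar>x - b\<bar>) * exp (- (\<gamma> - \<alpha>\<^sup>2 - \<alpha> * V) * (t - \<tau>)) / sqrt (4 * pi * (t - \<tau>))"
    using \<tau> by (intro divide_right_mono) simp_all
  then show ?thesis
    using mult_left_mono[OF heatG_le_exp_weight[OF \<tau>, of x a \<alpha>], of "exp (- \<gamma> * (t - \<tau>))"]
    by simp
qed

lemma T1_integrand_le:
  assumes \<tau>: "0 \<le> \<tau>" "\<tau> < t" and \<alpha>: "\<alpha> \<ge> 0"
    and v_le: "\<bar>v \<tau>\<bar> \<le> V" and s_lip: "\<bar>s t - s \<tau>\<bar> \<le> V * (t - \<tau>)"
  shows "\<bar>exp (- \<gamma> * (t - \<tau>)) * heatG x t (s \<tau>) \<tau> * v \<tau>\<bar>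
    \<le> V / sqrt (4 * pi) * exp (- \<alpha> * \<bar>x - s t\<bar>) * (exp (- (\<gamma> - \<alpha>\<^sup>2 - \<alpha> * V) * (t - \<tau>)) / sqrt (t - \<tau>))"
proof -
  have "\<bar>exp (- \<gamma> * (t - \<tau>)) * heatG x t (s \<tau>) \<tau> * v \<tau>\<bar> = exp (- \<gamma> * (t - \<tau>)) * heatG x t (s \<tau>) \<tau> * \<bar>v \<tau>\<bar>"
    using heatG_nonneg[of \<tau> t] \<tau> by (simp add: abs_mult)
  also have "\<dots> \<le> exp (- \<alpha> * \<bar>x - s t\<bar>) * (exp (- (\<gamma> - \<alpha>\<^sup>2 - \<alpha> * V) * (t - \<tau>)) / sqrt (4 * pi * (t - \<tau>))) * V"
    by (rule mult_mono[OF damped_heatG_le_moving_weight[OF \<tau>(2) \<alpha> s_lip] v_le]) (use \<tau> in simp_all)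
  also have "\<dots> = V / sqrt (4 * pi) * exp (- \<alpha> * \<bar>x - s t\<bar>) * (exp (- (\<gamma> - \<alpha>\<^sup>2 - \<alpha> * V) * (t - \<tau>)) / sqrt (t - \<tau>))"
    by (simp add: real_sqrt_mult)
  finally show ?thesis .
qed

lemma T1_exp_weight_le:
  assumes \<gamma>: "\<gamma> > 0" and t: "t > 0" and \<alpha>: "\<alpha> \<ge> 0"
    and v_le: "\<And>\<tau>. 0 \<le> \<tau> \<Longrightarrow> \<tau> < t \<Longrightarrow> \<bar>v \<tau>\<bar> \<le> V"
    and s_lip: "\<And>\<tau>. 0 \<le> \<tau> \<Longrightarrow> \<tau> < t \<Longrightarrow> \<bar>s t - s \<tau>\<bar> \<le> V * (t - \<tau>)"
    and rate: "4 * (\<alpha>\<^sup>2 + \<alpha> * V) \<le> 3 * \<gamma>"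
  shows "exp (\<alpha> * \<bar>x - s t\<bar>) * \<bar>T1 \<gamma> s v t x\<bar> \<le> V / sqrt \<gamma>"
proof -
  define c where "c = \<gamma> - \<alpha>\<^sup>2 - \<alpha> * V"
  have four_c: "\<gamma> \<le> 4 * c" using rate unfolding c_def by (simp add: algebra_simps)
  have c: "c > 0" using \<gamma> four_c by linarith
  have V: "V \<ge> 0" using v_le[of 0] t by simp
  define K where "K = V / sqrt (4 * pi) * exp (- \<alpha> * \<bar>x - s t\<bar>)"
  have K: "K \<ge> 0" using V by (simp add: K_def)
  have "\<bar>exp (- \<gamma> * (t - \<tau>)) * heatG x t (s \<tau>) \<tau> * v \<tau>\<bar> \<le> K * (exp (- c * (t - \<tau>)) / sqrt (t - \<tau>))"
    if "0 \<le> \<tau>" "\<tau> < t" for \<tau>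
    using T1_integrand_le[where s=s and v=v, OF that \<alpha> v_le[OF that] s_lip[OF that]]
    by (simp add: K_def c_def)
  then have "\<bar>integral {0..t} (\<lambda>\<tau>. exp (- \<gamma> * (t - \<tau>)) * heatG x t (s \<tau>) \<tau> * v \<tau>)\<bar> \<le> K * sqrt (pi / c)"
    by (rule abs_integral_le_exp_over_sqrt_kernel[OF c K])
  then have "exp (\<alpha> * \<bar>x - s t\<bar>) * \<bar>T1 \<gamma> s v t x\<bar> \<le> exp (\<alpha> * \<bar>x - s t\<bar>) * (K * sqrt (pi / c))"
    by (simp add: T1_def)
  also have "\<dots> = V / (2 * sqrt c)"
    using c by (simp add: K_def real_sqrt_mult real_sqrt_divide exp_minus field_simps)
  also have "\<dots> \<le> V / sqrt \<gamma>"
  proof -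
    have "sqrt \<gamma> \<le> 2 * sqrt c"
      using real_sqrt_le_mono[OF four_c] by (simp add: real_sqrt_mult)
    then show ?thesis
      using V \<gamma> c by (intro divide_left_mono) auto
  qed
  finally show ?thesis .
qed

lemma wnorm_at_le_ereal:
  assumes "\<And>x. exp (\<alpha> * \<bar>x - c\<bar>) * \<bar>f x\<bar> \<le> B"
  shows "wnorm_at \<alpha> c f \<le> ereal B"
  unfolding wnorm_at_def using assms by (intro SUP_least) simp

lemma wnorm_at_add_le:
  assumes "\<And>x. f x = g x + h x"
    and "\<And>x. exp (\<alpha> * \<bar>x - c\<bar>) * \<bar>g x\<bar> \<le> A" and "\<And>x. exp (\<alpha> * \<bar>x - c\<bar>) * \<bar>h x\<bar> \<le> B"
  shows "wnorm_at \<alpha> c f \<le> ereal (A + B)"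
proof (rule wnorm_at_le_ereal)
  fix x
  have "exp (\<alpha> * \<bar>x - c\<bar>) * \<bar>f x\<bar> \<le> exp (\<alpha> * \<bar>x - c\<bar>) * \<bar>g x\<bar> + exp (\<alpha> * \<bar>x - c\<bar>) * \<bar>h x\<bar>"
    using assms(1) by (simp add: distrib_left[symmetric] abs_triangle_ineq)
  then show "exp (\<alpha> * \<bar>x - c\<bar>) * \<bar>f x\<bar> \<le> A + B"
    using assms(2,3)[of x] by linarith
qed

lemma abs_le_wnorm:
  assumes "wnorm \<alpha> f = ereal M"
  shows "\<bar>f \<xi>\<bar> \<le> M * exp (- \<alpha> * \<bar>\<xi>\<bar>)"
proof -
  have "ereal (exp (\<alpha> * \<bar>\<xi>\<bar>) * \<bar>f \<xi>\<bar>) \<le> wnorm \<alpha> f"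
    unfolding wnorm_def by (rule SUP_upper) simp
  then show ?thesis
    using assms by (simp add: exp_minus field_simps)
qed

lemma C_alpha_wnorm_finite:
  assumes "f \<in> C_alpha \<alpha>"
  obtains M where "wnorm \<alpha> f = ereal M"
proof -
  have "0 \<le> ereal (exp (\<alpha> * \<bar>0\<bar>) * \<bar>f 0\<bar>)" by simp
  also have "\<dots> \<le> wnorm \<alpha> f"
    unfolding wnorm_def by (rule SUP_upper) simp
  finally have "0 \<le> wnorm \<alpha> f" .
  moreover have "wnorm \<alpha> f < \<infinity>"
    using assms by (simp add: C_alpha_def)
  ultimately show thesis
    using that by (cases "wnorm \<alpha> f") auto
qed

lemma fip_solution_interface_lipschitz:
  assumes sol: "fip_solution \<gamma> g u0 s v u" and v_le: "\<And>\<tau>. 0 \<le> \<tau> \<Longrightarrow> \<bar>v \<tau>\<bar> \<le> V"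
    and "0 \<le> \<tau>" "\<tau> \<le> t"
  shows "\<bar>s t - s \<tau>\<bar> \<le> V * (t - \<tau>)"
proof -
  have "(s has_field_derivative v r) (at r within {0..})" if "r \<in> {0..}" for r
    using sol that by (simp add: fip_solution_def)
  from field_differentiable_bound[OF convex_real_interval(1) this, of V t \<tau>]
  show ?thesis using v_le assms(3,4) by auto
qed

lemma alpha_space_rate:
  fixes \<alpha> \<gamma> v0 V :: real
  assumes "0 \<le> \<alpha>" "0 < v0" "v0 \<le> V" "\<alpha> \<le> min (v0 / 4) (\<gamma> / (2 * V))"
  shows "4 * (\<alpha>\<^sup>2 + \<alpha> * V) \<le> 3 * \<gamma>"
proof -
  have V: "V > 0" using assms by linarith
  have "\<alpha> * V \<le> \<gamma> / 2"
    using mult_right_mono[of \<alpha> "\<gamma> / (2 * V)" V] assms V by simp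
  moreover have "\<alpha>\<^sup>2 \<le> \<alpha> * V / 4"
    using mult_left_mono[of \<alpha> "V / 4" \<alpha>] assms by (simp add: power2_eq_square)
  moreover have "0 \<le> \<alpha> * V"
    using assms V by simp
  ultimately show ?thesis
    unfolding distrib_left by linarith
qed

lemma power2_add_mult_less_below_root:
  fixes \<alpha> \<gamma> V :: real
  assumes \<alpha>: "0 \<le> \<alpha>" and V: "0 < V" and below: "\<alpha> < V / 2 * (sqrt (1 + 4 * \<gamma> / V\<^sup>2) - 1)"
  shows "\<alpha>\<^sup>2 + \<alpha> * V < \<gamma>"
proof -
  define q where "q = 1 + 4 * \<gamma> / V\<^sup>2"
  have "2 * \<alpha> + V < V * sqrt q"
    using below V by (simp add: q_def field_simps)
  moreover have "0 < V * (sqrt q - 1)"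
    using below \<alpha> V by (simp add: q_def)
  then have "1 < sqrt q"
    using V by (simp add: zero_less_mult_iff)
  then have "0 \<le> q" by simp
  ultimately have "(2 * \<alpha> + V)\<^sup>2 < V\<^sup>2 * q"
    using \<alpha> V power_strict_mono[of "2 * \<alpha> + V" "V * sqrt q" 2] by (simp add: power_mult_distrib)
  also have "\<dots> = V\<^sup>2 + 4 * \<gamma>"
    using V by (simp add: q_def field_simps)
  finally show ?thesis
    by (simp add: power2_eq_square algebra_simps)
qed

theorem mainTheorem5:
  fixes \<gamma> v0 V0 C \<alpha> :: real
    and g g' u0 s v :: "real \<Rightarrow> real"
    and u :: "real \<Rightarrow> real \<Rightarrow> real"
  assumes gamma_pos: "\<gamma> > 0"
    and v0_pos: "0 < v0" and v0_le: "v0 \<le> V0"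
    and g_mono: "\<forall>a b. 0 \<le> a \<and> a \<le> b \<longrightarrow> g b \<le> g a"
    and g_deriv: "\<forall>y\<ge>0. (g has_real_derivative g' y) (at y within {0..})"
    and g'_bound: "\<forall>y\<ge>0. \<bar>g' y\<bar> \<le> C"
    and g_bounds: "\<forall>y\<ge>0. - V0 \<le> g y \<and> g y \<le> - v0"
    and alpha_nonneg: "0 \<le> \<alpha>"
    and alpha_space: "\<alpha> \<le> min (v0 / 4) (\<gamma> / (2 * V0))"
    and u0_in: "u0 \<in> C_alpha \<alpha>"
    and sol: "fip_solution \<gamma> g u0 s v u"
    and vel: "\<forall>t\<ge>0. - V0 \<le> v t \<and> v t \<le> - v0"
    and repr: "\<forall>t>0. \<forall>x. u x t = T1 \<gamma> s v t x + T2 \<gamma> t u0 x"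
  shows "(\<forall>t>0. wnorm_at \<alpha> (s t) (\<lambda>x. u x t)
            \<le> ereal (V0 / sqrt \<gamma>)
              + ereal (2 * exp ((- \<gamma> + \<alpha>\<^sup>2 + \<alpha> * V0) * t)) * wnorm \<alpha> u0)
       \<and> (\<alpha> < V0 / 2 * (sqrt (1 + 4 * \<gamma> / V0\<^sup>2) - 1) \<longrightarrow>
            (let \<kappa> = \<gamma> - \<alpha>\<^sup>2 - \<alpha> * V0 in
              \<kappa> > 0 \<and>
              (\<forall>t>0. wnorm_at \<alpha> (s t) (T2 \<gamma> t u0)
                       \<le> ereal (2 * exp (- \<kappa> * t)) * wnorm \<alpha> u0)))"
proof -
  obtain M where M: "wnorm \<alpha> u0 = ereal M"
    using u0_in by (rule C_alpha_wnorm_finite)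
  have u0_le: "\<bar>u0 \<xi>\<bar> \<le> M * exp (- \<alpha> * \<bar>\<xi>\<bar>)" for \<xi>
    using M by (rule abs_le_wnorm)
  have v_le: "\<bar>v \<tau>\<bar> \<le> V0" if "0 \<le> \<tau>" for \<tau>
    using vel[rule_format, OF that] v0_pos v0_le by (simp add: abs_le_iff)
  have s_lip: "\<bar>s t - s \<tau>\<bar> \<le> V0 * (t - \<tau>)" if "0 \<le> \<tau>" "\<tau> \<le> t" for t \<tau>
    using fip_solution_interface_lipschitz[OF sol v_le that] .
  have s0: "s 0 = 0"
    using sol by (simp add: fip_solution_def)
  have rate: "4 * (\<alpha>\<^sup>2 + \<alpha> * V0) \<le> 3 * \<gamma>"
    using alpha_space_rate[OF alpha_nonneg v0_pos v0_le alpha_space] .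
  have T1_le: "exp (\<alpha> * \<bar>x - s t\<bar>) * \<bar>T1 \<gamma> s v t x\<bar> \<le> V0 / sqrt \<gamma>" if "t > 0" for t x
    using v_le s_lip by (intro T1_exp_weight_le[OF gamma_pos that alpha_nonneg _ _ rate]) auto
  have T2_le: "exp (\<alpha> * \<bar>x - s t\<bar>) * \<bar>T2 \<gamma> t u0 x\<bar> \<le> 2 * M * exp ((- \<gamma> + \<alpha>\<^sup>2 + \<alpha> * V0) * t)"
    if "t > 0" for t x
    using s_lip[of 0 t] s0 that by (intro T2_exp_weight_le[OF that alpha_nonneg _ u0_le]) simp
  have "wnorm_at \<alpha> (s t) (\<lambda>x. u x t) \<le> ereal (V0 / sqrt \<gamma> + 2 * M * exp ((- \<gamma> + \<alpha>\<^sup>2 + \<alpha> * V0) * t))"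
    if "t > 0" for t
    by (rule wnorm_at_add_le[OF _ T1_le[OF that] T2_le[OF that]]) (use repr that in simp)
  moreover have "wnorm_at \<alpha> (s t) (T2 \<gamma> t u0) \<le> ereal (2 * exp (- (\<gamma> - \<alpha>\<^sup>2 - \<alpha> * V0) * t)) * wnorm \<alpha> u0"
    if "t > 0" for t
    using wnorm_at_le_ereal[OF T2_le[OF that]] M by (simp add: algebra_simps)
  moreover have "\<gamma> - \<alpha>\<^sup>2 - \<alpha> * V0 > 0" if "\<alpha> < V0 / 2 * (sqrt (1 + 4 * \<gamma> / V0\<^sup>2) - 1)"
    using power2_add_mult_less_below_root[OF alpha_nonneg _ that] v0_pos v0_le by simp
  ultimately show ?thesis
    using M by (simp add: Let_def algebra_simps)
qed

end
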